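(* For each prime number $p$, there exists a self-similar $p$-adic fractal string $\mathcal{L}_p\subseteq\mathbb{Z}_p$ of Minkowski--Bouligand dimension $D=\frac{1}{2}$ and with oscillatory period $\mathbf{p}=\frac{\pi}{\log p}$; that is, the geometric zeta function of $\mathcal{L}_p$ has a meromorphic continuation to all of $\mathbb{C}$ whose set of poles (the complex dimensions of $\mathcal{L}_p$) is exactly $\{\frac12+in\frac{\pi}{\log p} : n\in\mathbb{Z}\}$, and $\frac12$ is the abscissa of convergence of the series defining the geometric zeta function.
   Context: Let $p$ be a prime and $\mathbb{Z}_p$ the ring of $p$-adic integers with the $p$-adic absolute value $|\cdot|_p$ ($|p|_p=p^{-1}$). A $p$-adic fractal string $\mathcal{L}$ in $\mathbb{Z}_p$ is a countable disjoint union of balls of the form $a+p^n\mathbb{Z}_p$ ($a\in\mathbb{Z}_p$, $n\geq 1$) contained in $\mathbb{Z}_p$; the ball $a+p^n\mathbb{Z}_p$ has length $p^{-n}$, and $\mathcal{L}$ is encoded by its sequence of lengths $l_j$ (counted with multiplicity). Its geometric zeta function is $\zeta_{\mathcal{L}}(s)=\sum_j l_j^s$, defined for $\Re(s)$ larger than the abscissa of convergence, and (when possible) meromorphically continued to $\mathbb{C}$. The complex dimensions of $\mathcal{L}$ are the poles of this meromorphic continuation. The Minkowski--Bouligand dimension $D$ of $\mathcal{L}$ is the abscissa of convergence of $\sum_j l_j^s$. $\mathcal{L}$ is said to have oscillatory period $\mathbf{p}>0$ if its set of complex dimensions is exactly $\{D+in\mathbf{p}: n\in\mathbb{Z}\}$.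 $\mathcal{L}$ is self-similar if it is the complement in $\mathbb{Z}_p$ of the unique nonempty compact set $K\subseteq\mathbb{Z}_p$ satisfying $K=\bigcup_{i}\phi_i(K)$ for a finite family of at least two similarity contractions $\phi_i(x)=c_i+p^{m}x$ of $\mathbb{Z}_p$ into itself (with $c_i\in\mathbb{Z}$, $m\ge1$). *)

theory Defs
  imports "HOL-Analysis.Analysis" "HOL-Complex_Analysis.Complex_Analysis"
begin

text \<open>The ring of p-adic integers, modelled as the inverse limit of the
rings Z/p^n Z: an element x is the sequence of its residues x n mod p^n
(0 <= x n < p^n), compatible under reduction. On nat => int the product
topology (int discrete) restricts to the p-adic topology on this set.\<close>

definition Zp :: "nat \<Rightarrow> (nat \<Rightarrow> int) set" where
  "Zp p = {x. \<forall>n. 0 \<le> x n \<and> x n < int p ^ n \<and> x (Suc n) mod (int p ^ n) = x n}"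

text \<open>The ball a + p^n Z_p (n >= 1) is determined by the residue r of a mod p^n;
it is encoded by the pair (n, r) with 0 <= r < p^n, and has length p^(-n).\<close>

definition padic_ball :: "nat \<Rightarrow> nat \<Rightarrow> int \<Rightarrow> (nat \<Rightarrow> int) set" where
  "padic_ball p n r = {x \<in> Zp p. x n = r}"

definition ball_codes :: "nat \<Rightarrow> (nat \<times> int) set" where
  "ball_codes p = {(n, r). 1 \<le> n \<and> 0 \<le> r \<and> r < int p ^ n}"

definition maximal_balls :: "nat \<Rightarrow> (nat \<Rightarrow> int) set \<Rightarrow> (nat \<times> int) set" where
  "maximal_balls p U = {(n, r) \<in> ball_codes p. padic_ball p n r \<subseteq> U \<and>
      \<not> (\<exists>(n', r') \<in> ball_codes p. n' < n \<and> padic_ball p n r \<subseteq> padic_ball p n' r'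
                                   \<and> padic_ball p n' r' \<subseteq> U)}"

definition padic_sim :: "nat \<Rightarrow> int \<Rightarrow> nat \<Rightarrow> (nat \<Rightarrow> int) \<Rightarrow> (nat \<Rightarrow> int)" where
  "padic_sim p c m x = (\<lambda>n. (c + int p ^ m * x (n - m)) mod (int p ^ n))"

definition ball_length :: "nat \<Rightarrow> nat \<times> int \<Rightarrow> real" where
  "ball_length p b = real p powr (- real (fst b))"

definition zeta_term :: "nat \<Rightarrow> complex \<Rightarrow> nat \<times> int \<Rightarrow> complex" where
  "zeta_term p s b = complex_of_real (ball_length p b) powr s"

end

theory Submission
  imports Defs
begin

text \<open>Take for K the p-adic integers whose base-p digits at the odd positions p, p^3, p^5, ...
  vanish: K is the attractor of the p maps x \<mapsto> i + p^2 x (0 \<le> i < p). The maximal balls of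
  the complement are the balls of radius p^-(2j+2) whose centre has its first nonzero odd digit
  at p^(2j+1); there are (p - 1) p^(j+1) of them, so the geometric zeta function is
  \<Sum>j (p - 1) p^(j+1) p^(-(2j+2)s) = (p - 1) w / (1 - w) with w = p^(1-2s). The series
  converges iff |w| < 1, i.e. Re s > 1/2, and the poles are the solutions of w = 1,
  namely s = 1/2 + i n pi / log p.\<close>

section \<open>Similarities and shifts of the p-adic integers\<close>

lemma mod_power_mod_power:
  fixes r q :: int
  assumes "k \<le> n"
  shows "r mod q ^ n mod q ^ k = r mod q ^ k"
  using assms by (simp add: le_imp_power_dvd mod_mod_cancel)

lemma zdiv_less_iff_less_mult:
  fixes r Q M :: int
  assumes "0 < Q"
  shows "r div Q < M \<longleftrightarrow> r < Q * M"
proof -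
  have r: "r = Q * (r div Q) + r mod Q" by simp
  have bounds: "0 \<le> r mod Q" "r mod Q < Q" using assms by simp_all
  show ?thesis
  proof
    assume "r div Q < M"
    then have "Q * (r div Q + 1) \<le> Q * M" using assms by (intro mult_left_mono) auto
    then have "Q * (r div Q) + Q \<le> Q * M" by (simp add: distrib_left)
    then show "r < Q * M" using r bounds by linarith
  next
    assume "r < Q * M"
    then have "Q * (r div Q) < Q * M" using r bounds by linarith
    then show "r div Q < M" using assms by simp
  qed
qed

lemma Zp_bounds: "x \<in> Zp p \<Longrightarrow> 0 \<le> x n \<and> x n < int p ^ n"
  unfolding Zp_def by auto

lemma Zp_zero: "x \<in> Zp p \<Longrightarrow> x 0 = 0"
  using Zp_bounds[of x p 0] by simp

lemma Zp_mod_power: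
  assumes "x \<in> Zp p" "k \<le> n"
  shows "x n mod int p ^ k = x k"
  using assms(2)
proof (induction n rule: dec_induct)
  case base
  show ?case using Zp_bounds[OF assms(1)] by simp
next
  case (step n)
  have "x (Suc n) mod int p ^ k = x (Suc n) mod int p ^ n mod int p ^ k"
    using step.hyps by (simp add: mod_power_mod_power)
  also have "\<dots> = x n mod int p ^ k" using assms(1) by (simp add: Zp_def)
  finally show ?case using step.IH by simp
qed

lemma padic_sim_in_Zp:
  assumes "p > 0" "y \<in> Zp p"
  shows "padic_sim p c m y \<in> Zp p"
proof -
  let ?q = "int p"
  have compatible: "(c + ?q ^ m * y (Suc n - m)) mod ?q ^ n = (c + ?q ^ m * y (n - m)) mod ?q ^ n"
    for n
  proof (cases "n < m")
    case False
    then obtain k where n: "n = m + k" by (metis le_add_diff_inverse not_less)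
    have "?q ^ k dvd y (Suc k) - y k"
      using Zp_mod_power[OF assms(2), of k "Suc k"] Zp_bounds[OF assms(2), of k]
      by (simp add: mod_eq_dvd_iff[symmetric])
    then have "?q ^ m * ?q ^ k dvd ?q ^ m * (y (Suc k) - y k)" by simp
    then show ?thesis by (simp add: n Suc_diff_le power_add mod_eq_dvd_iff algebra_simps)
  qed simp
  moreover have "r mod ?q ^ Suc n mod ?q ^ n = r mod ?q ^ n" for r n
    by (rule mod_power_mod_power) simp
  ultimately show ?thesis
    unfolding Zp_def padic_sim_def using assms(1) by simp
qed

lemma padic_sim_low:
  assumes "y \<in> Zp p" "n \<le> m"
  shows "padic_sim p c m y n = c mod int p ^ n"
  using assms by (simp add: padic_sim_def Zp_zero)

lemma padic_sim_high:
  assumes "p > 0" "y \<in> Zp p" "0 \<le> c" "c < int p ^ m"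
  shows "padic_sim p c m y (n + m) = c + int p ^ m * y n"
proof -
  let ?q = "int p"
  have "?q ^ m * y n \<le> ?q ^ m * (?q ^ n - 1)"
    using Zp_bounds[OF assms(2), of n] by (intro mult_left_mono) auto
  then have "c + ?q ^ m * y n < ?q ^ (n + m)"
    using assms(4) by (simp add: power_add algebra_simps)
  moreover have "0 \<le> c + ?q ^ m * y n" using assms(3) Zp_bounds[OF assms(2), of n] by simp
  ultimately show ?thesis by (simp add: padic_sim_def)
qed

definition padic_shift :: "nat \<Rightarrow> nat \<Rightarrow> (nat \<Rightarrow> int) \<Rightarrow> (nat \<Rightarrow> int)" where
  "padic_shift p m x = (\<lambda>n. x (n + m) div int p ^ m)"

lemma padic_shift_in_Zp:
  assumes "p > 0" "x \<in> Zp p"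
  shows "padic_shift p m x \<in> Zp p"
proof -
  let ?q = "int p"
  have bounds: "0 \<le> x (n + m) div ?q ^ m \<and> x (n + m) div ?q ^ m < ?q ^ n" for n
    using Zp_bounds[OF assms(2), of "n + m"] assms(1)
    by (simp add: pos_imp_zdiv_nonneg_iff zdiv_less_iff_less_mult power_add mult.commute)
  have "x (Suc n + m) div ?q ^ m mod ?q ^ n = x (n + m) div ?q ^ m" for n
  proof -
    obtain t where t: "x (Suc n + m) = x (n + m) + ?q ^ (n + m) * t"
      using Zp_mod_power[OF assms(2), of "n + m" "Suc n + m"]
      by (metis le_add2 add_Suc mod_mult_div_eq add.commute le_SucI order_refl)
    then have "x (Suc n + m) = x (n + m) + (?q ^ n * t) * ?q ^ m"
      by (simp add: power_add algebra_simps)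
    then have "x (Suc n + m) div ?q ^ m = x (n + m) div ?q ^ m + ?q ^ n * t"
      using assms(1) by simp
    then show ?thesis using bounds[of n] by simp
  qed
  then show ?thesis using bounds by (simp add: Zp_def padic_shift_def)
qed

lemma padic_sim_shift:
  assumes "p > 0" "x \<in> Zp p"
  shows "padic_sim p (x m) m (padic_shift p m x) = x"
proof
  fix n
  let ?q = "int p"
  have shift: "padic_shift p m x \<in> Zp p" by (rule padic_shift_in_Zp[OF assms])
  show "padic_sim p (x m) m (padic_shift p m x) n = x n"
  proof (cases "n \<le> m")
    case True
    then show ?thesis using padic_sim_low[OF shift True] Zp_mod_power[OF assms(2) True] by simp
  next
    case False
    then obtain k where n: "n = k + m" by (metis add.commute le_add_diff_inverse nat_le_linear)
    have "padic_sim p (x m) m (padic_shift p m x) n = x m + ?q ^ m * (x (k + m) div ?q ^ m)"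
      using padic_sim_high[OF assms(1) shift] Zp_bounds[OF assms(2), of m]
      by (simp add: n padic_shift_def)
    also have "\<dots> = x n"
      using Zp_mod_power[OF assms(2), of m n] by (metis n le_add2 mod_mult_div_eq)
    finally show ?thesis .
  qed
qed

section \<open>The attractor\<close>

text \<open>The coordinates x (2j+1) and x (2j+2) of a p-adic integer differ exactly by its
  base-p digit at p^(2j+1) (times p^(2j+1)).\<close>

definition even_digits :: "nat \<Rightarrow> (nat \<Rightarrow> int) set" where
  "even_digits p = {x \<in> Zp p. \<forall>j. x (2*j+2) = x (2*j+1)}"

lemma padic_sim_first_odd_digit:
  assumes "y \<in> Zp p" "0 \<le> i" "i < int p"
  shows "padic_sim p i 2 y 2 = padic_sim p i 2 y 1"
proof -
  have "int p \<le> int p ^ 2" using assms(2,3) by (simp add: power2_eq_square)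
  then have "i < int p ^ 2" using assms(3) by linarith
  then show ?thesis using padic_sim_low[OF assms(1)] assms(2,3) by simp
qed

lemma padic_sim_odd_digit_Suc:
  assumes "p > 0" "y \<in> Zp p" "0 \<le> i" "i < int p"
  shows "padic_sim p i 2 y (2 * Suc j + 2) = padic_sim p i 2 y (2 * Suc j + 1)
    \<longleftrightarrow> y (2*j+2) = y (2*j+1)"
proof -
  have "int p \<le> int p ^ 2" using assms(1) by (simp add: power2_eq_square)
  then have "i < int p ^ 2" using assms(4) by linarith
  then have "padic_sim p i 2 y (n + 2) = i + int p ^ 2 * y n" for n
    using padic_sim_high[OF assms(1,2,3), of 2] by blast
  moreover have "2 * Suc j + 2 = (2*j+2) + 2" "2 * Suc j + 1 = (2*j+1) + 2" by simp_all
  ultimately show ?thesis using assms(1) by simp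
qed

lemma padic_sim_even_digits:
  assumes "p > 0" "y \<in> even_digits p" "0 \<le> i" "i < int p"
  shows "padic_sim p i 2 y \<in> even_digits p"
proof -
  have y: "y \<in> Zp p" using assms(2) by (simp add: even_digits_def)
  have "padic_sim p i 2 y (2*j+2) = padic_sim p i 2 y (2*j+1)" for j
  proof (cases j)
    case 0
    then show ?thesis
      using padic_sim_first_odd_digit[OF y assms(3,4)] by (simp add: numeral_2_eq_2)
  next
    case (Suc j')
    then show ?thesis
      using padic_sim_odd_digit_Suc[OF assms(1) y assms(3,4)] assms(2)
      by (simp add: even_digits_def)
  qed
  then show ?thesis using padic_sim_in_Zp[OF assms(1) y] by (simp add: even_digits_def)
qed

lemma padic_shift_even_digits:
  assumes "p > 0" "x \<in> even_digits p"
  shows "padic_shift p 2 x \<in> even_digits p"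
proof -
  have "x (2 * Suc j + 2) = x (2 * Suc j + 1)" for j
    using assms(2) unfolding even_digits_def by blast
  moreover have "padic_shift p 2 x \<in> Zp p"
    using padic_shift_in_Zp[OF assms(1)] assms(2) by (simp add: even_digits_def)
  ultimately show ?thesis by (simp add: even_digits_def padic_shift_def)
qed

lemma even_digits_eq_Union:
  assumes "p > 0"
  shows "even_digits p = (\<Union>i<p. padic_sim p (int i) 2 ` even_digits p)"
proof
  show "(\<Union>i<p. padic_sim p (int i) 2 ` even_digits p) \<subseteq> even_digits p"
    using padic_sim_even_digits[OF assms] by auto
  show "even_digits p \<subseteq> (\<Union>i<p. padic_sim p (int i) 2 ` even_digits p)"
  proof
    fix x assume x: "x \<in> even_digits p"
    have xZ: "x \<in> Zp p" and "x (2*0+2) = x (2*0+1)"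
      using x unfolding even_digits_def by blast+
    then have "x = padic_sim p (int (nat (x 1))) 2 (padic_shift p 2 x)"
      using padic_sim_shift[OF assms xZ, of 2] Zp_bounds[OF xZ, of 1]
      by (simp add: numeral_2_eq_2)
    moreover have "nat (x 1) < p" using Zp_bounds[OF xZ, of 1] by (simp add: nat_less_iff)
    ultimately show "x \<in> (\<Union>i<p. padic_sim p (int i) 2 ` even_digits p)"
      using padic_shift_even_digits[OF assms x] by blast
  qed
qed

section \<open>Compactness and uniqueness of the attractor\<close>

lemma compact_imp_closed_fun:
  fixes S :: "('i \<Rightarrow> 'a::t2_space) set"
  assumes "compact S"
  shows "closed S"
proof -
  have "Hausdorff_space (euclidean :: 'a topology)"
    unfolding Hausdorff_space_def disjnt_def open_openin[symmetric] using hausdorff by blast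
  then have "Hausdorff_space (product_topology (\<lambda>_::'i. euclidean :: 'a topology) UNIV)"
    unfolding Hausdorff_space_product_topology by blast
  moreover have "compactin (product_topology (\<lambda>_. euclidean) UNIV) S"
    using assms by (simp only: compactin_euclidean_iff euclidean_product_topology)
  ultimately have "closedin (product_topology (\<lambda>_. euclidean) UNIV) S"
    using compactin_imp_closedin by blast
  then show ?thesis by (simp only: euclidean_product_topology closed_closedin)
qed

lemma mem_closed_fun_if_approximable:
  fixes S :: "(nat \<Rightarrow> 'a::topological_space) set"
  assumes "closed S" "\<And>k. \<exists>y\<in>S. \<forall>n\<le>k. y n = x n"
  shows "x \<in> S"
proof -
  obtain y where y: "\<And>k. y k \<in> S" "\<And>k n. n \<le> k \<Longrightarrow> y k n = x n"
    using assms(2) by metis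
  have "limitin euclidean (\<lambda>k. y k n) (x n) sequentially" for n
    unfolding limitin_canonical_iff
    by (rule tendsto_eventually) (use y(2) in \<open>auto simp: eventually_sequentially\<close>)
  then have "limitin (product_topology (\<lambda>_. euclidean) UNIV) y x sequentially"
    by (simp add: limitin_componentwise)
  then have "y \<longlonglongrightarrow> x" by (simp add: euclidean_product_topology limitin_canonical_iff)
  then show ?thesis using closed_sequentially[OF assms(1)] y(1) by blast
qed

lemma closed_coordinate: "closed {x :: nat \<Rightarrow> 'a::discrete_topology. Q (x n)}"
  using closed_vimage[of "Collect Q" "\<lambda>x. x n"] by (simp add: closed_def open_discrete vimage_def)

lemma closed_coordinate_relation:
  "closed {x :: nat \<Rightarrow> 'a::discrete_topology. P (x m) (x n)}"
proof -
  have eq: "{x. P (x m) (x n)} = (\<Inter>a. {x. x m \<noteq> a} \<union> {x. P a (x n)})"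
    by auto
  show ?thesis unfolding eq by (intro closed_INT closed_Un closed_coordinate ballI)
qed

lemma closed_Zp: "closed (Zp p)"
proof -
  have eq: "Zp p = (\<Inter>n. {x. 0 \<le> x n \<and> x n < int p ^ n})
      \<inter> (\<Inter>n. {x. x (Suc n) mod int p ^ n = x n})"
    by (auto simp: Zp_def)
  show ?thesis
    unfolding eq by (intro closed_Int closed_INT closed_coordinate closed_coordinate_relation ballI)
qed

lemma closed_even_digits: "closed (even_digits p)"
proof -
  have eq: "even_digits p = Zp p \<inter> (\<Inter>j. {x. x (2*j+2) = x (2*j+1)})"
    by (auto simp: even_digits_def)
  show ?thesis
    unfolding eq by (intro closed_Int closed_INT closed_Zp closed_coordinate_relation ballI)
qed

lemma compact_subset_Zp:
  assumes "closed S" "S \<subseteq> Zp p"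
  shows "compact S"
proof -
  have "compactin (product_topology (\<lambda>_. euclidean) UNIV) (PiE UNIV (\<lambda>n. {0..<int p ^ n}))"
    unfolding compactin_PiE by (auto intro: finite_imp_compact)
  then have "compact (PiE UNIV (\<lambda>n. {0..<int p ^ n}))"
    by (simp add: euclidean_product_topology compactin_euclidean_iff)
  moreover have "S = PiE UNIV (\<lambda>n. {0..<int p ^ n}) \<inter> S"
    using assms(2) by (auto simp: Zp_def PiE_def)
  ultimately show ?thesis using assms(1) by (metis compact_Int_closed)
qed

text \<open>The invariance equation forces the elements of K' to have vanishing odd digits (induction
  on the digit), and it lets every element of the even-digit set be approximated digit by
  digit from inside the closed set K'.\<close>

lemma even_digits_unique:
  assumes "p > 0" "K' \<subseteq> Zp p" "K' \<noteq> {}" "compact K'"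
    and invariant: "K' = (\<Union>i<p. padic_sim p (int i) 2 ` K')"
  shows "K' = even_digits p"
proof
  have preimage: "\<exists>i y. i < p \<and> y \<in> K' \<and> x = padic_sim p (int i) 2 y" if "x \<in> K'" for x
    using that by (subst (asm) invariant) blast
  have "\<forall>x\<in>K'. x (2*j+2) = x (2*j+1)" for j
  proof (induction j)
    case 0
    show ?case
    proof
      fix x assume "x \<in> K'"
      then obtain i y where "i < p" "y \<in> K'" "x = padic_sim p (int i) 2 y" using preimage by blast
      then show "x (2*0+2) = x (2*0+1)"
        using padic_sim_first_odd_digit[of y p "int i"] assms(2) by (auto simp: numeral_2_eq_2)
    qed
  next
    case (Suc j)
    show ?case
    proof
      fix x assume "x \<in> K'"
      then obtain i y where "i < p" "y \<in> K'" "x = padic_sim p (int i) 2 y" using preimage by blast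
      then show "x (2 * Suc j + 2) = x (2 * Suc j + 1)"
        using padic_sim_odd_digit_Suc[OF assms(1), of y "int i" j] assms(2) Suc.IH by auto
    qed
  qed
  then show "K' \<subseteq> even_digits p" using assms(2) by (auto simp: even_digits_def)
next
  have image: "padic_sim p (int i) 2 y \<in> K'" if "i < p" "y \<in> K'" for i y
    using that by (subst invariant) blast
  have approx: "\<forall>x\<in>even_digits p. \<exists>y\<in>K'. \<forall>n\<le>2*k. y n = x n" for k
  proof (induction k)
    case 0
    obtain z where "z \<in> K'" using assms(3) by blast
    moreover have "z 0 = x 0" if "x \<in> even_digits p" for x
      using that \<open>z \<in> K'\<close> assms(2) Zp_zero[of x p] Zp_zero[of z p]
      by (auto simp: even_digits_def)
    ultimately show ?case by auto
  next
    case (Suc k)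
    show ?case
    proof
      fix x assume x: "x \<in> even_digits p"
      then have xZ: "x \<in> Zp p" and "x (2*0+2) = x (2*0+1)" unfolding even_digits_def by blast+
      then have x_eq: "padic_sim p (x 1) 2 (padic_shift p 2 x) = x"
        using padic_sim_shift[OF assms(1) xZ, of 2] by (simp add: numeral_2_eq_2)
      obtain y where y: "y \<in> K'" "\<forall>n\<le>2*k. y n = padic_shift p 2 x n"
        using Suc.IH padic_shift_even_digits[OF assms(1) x] by blast
      have "int (nat (x 1)) = x 1" "nat (x 1) < p"
        using Zp_bounds[OF xZ, of 1] by (auto simp: nat_less_iff)
      then have "padic_sim p (x 1) 2 y \<in> K'" using image[OF _ y(1)] by metis
      moreover have "padic_sim p (x 1) 2 y n = x n" if "n \<le> 2 * Suc k" for n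
        using y(2) that fun_cong[OF x_eq, of n] by (simp add: padic_sim_def)
      ultimately show "\<exists>y\<in>K'. \<forall>n\<le>2 * Suc k. y n = x n" by blast
    qed
  qed
  show "even_digits p \<subseteq> K'"
  proof
    fix x assume x: "x \<in> even_digits p"
    have "\<exists>y\<in>K'. \<forall>n\<le>k. y n = x n" for k
    proof -
      obtain y where "y \<in> K'" "\<forall>n\<le>2*k. y n = x n" using approx[of k] x by blast
      then show ?thesis by (intro bexI[of _ y]) auto
    qed
    then show "x \<in> K'"
      by (rule mem_closed_fun_if_approximable[OF compact_imp_closed_fun[OF assms(4)]])
  qed
qed

section \<open>The maximal balls of the complement\<close>

text \<open>The index j counts odd positions: this is the base-p digit of r at p^(2j+1).\<close>

definition odd_digit_zero :: "nat \<Rightarrow> int \<Rightarrow> nat \<Rightarrow> bool" where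
  "odd_digit_zero p r j \<longleftrightarrow> r mod int p ^ (2*j+2) = r mod int p ^ (2*j+1)"

definition padic_of_int :: "nat \<Rightarrow> int \<Rightarrow> nat \<Rightarrow> int" where
  "padic_of_int p r = (\<lambda>k. r mod int p ^ k)"

lemma padic_of_int_in_Zp:
  assumes "p > 0"
  shows "padic_of_int p r \<in> Zp p"
proof -
  have "r mod int p ^ Suc n mod int p ^ n = r mod int p ^ n" for n
    by (rule mod_power_mod_power) simp
  then show ?thesis using assms by (simp add: Zp_def padic_of_int_def)
qed

lemma padic_of_int_in_ball:
  "p > 0 \<Longrightarrow> (n, r) \<in> ball_codes p \<Longrightarrow> padic_of_int p r \<in> padic_ball p n r"
  using padic_of_int_in_Zp[of p r] by (simp add: padic_ball_def ball_codes_def padic_of_int_def)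

lemma odd_digit_zero_mod_power:
  "2*j+2 \<le> n \<Longrightarrow> odd_digit_zero p (r mod int p ^ n) j \<longleftrightarrow> odd_digit_zero p r j"
  using mod_power_mod_power[where k="2*j+2" and n=n] mod_power_mod_power[where k="2*j+1" and n=n]
  by (simp add: odd_digit_zero_def)

lemma odd_digit_zero_beyond:
  assumes "p > 0" "0 \<le> r" "r < int p ^ n" "n < 2*j+2"
  shows "odd_digit_zero p r j"
proof -
  have "int p ^ n \<le> int p ^ (2*j+1)" using assms(1,4) by (intro power_increasing) auto
  moreover have "int p ^ (2*j+1) \<le> int p ^ (2*j+2)" using assms(1) by (intro power_increasing) auto
  ultimately show ?thesis using assms(2,3) by (simp add: odd_digit_zero_def)
qed

lemma Zp_odd_digit_zero:
  "x \<in> Zp p \<Longrightarrow> 2*j+2 \<le> n \<Longrightarrow> odd_digit_zero p (x n) j \<longleftrightarrow> x (2*j+2) = x (2*j+1)"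
  using Zp_mod_power[of x p "2*j+2" n] Zp_mod_power[of x p "2*j+1" n]
  by (simp add: odd_digit_zero_def)

lemma padic_ball_subset_iff:
  assumes "p > 0" "(n, r) \<in> ball_codes p" "n' \<le> n"
  shows "padic_ball p n r \<subseteq> padic_ball p n' r' \<longleftrightarrow> r' = r mod int p ^ n'"
proof
  assume "padic_ball p n r \<subseteq> padic_ball p n' r'"
  then show "r' = r mod int p ^ n'"
    using padic_of_int_in_ball[OF assms(1,2)] by (auto simp: padic_ball_def padic_of_int_def)
next
  assume "r' = r mod int p ^ n'"
  then show "padic_ball p n r \<subseteq> padic_ball p n' r'"
    using Zp_mod_power[OF _ assms(3)] by (auto simp: padic_ball_def)
qed

lemma padic_ball_subset_complement_iff:
  assumes "p > 0" "(n, r) \<in> ball_codes p"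
  shows "padic_ball p n r \<subseteq> Zp p - even_digits p
    \<longleftrightarrow> (\<exists>j. 2*j+2 \<le> n \<and> \<not> odd_digit_zero p r j)"
proof
  assume "padic_ball p n r \<subseteq> Zp p - even_digits p"
  then have "padic_of_int p r \<notin> even_digits p" using padic_of_int_in_ball[OF assms] by blast
  then obtain j where "\<not> odd_digit_zero p r j"
    using padic_of_int_in_Zp[OF assms(1)]
    by (auto simp: even_digits_def odd_digit_zero_def padic_of_int_def)
  moreover have "r < int p ^ n" "0 \<le> r" using assms(2) by (auto simp: ball_codes_def)
  ultimately show "\<exists>j. 2*j+2 \<le> n \<and> \<not> odd_digit_zero p r j"
    using odd_digit_zero_beyond[OF assms(1)] by (meson not_le)
next
  assume "\<exists>j. 2*j+2 \<le> n \<and> \<not> odd_digit_zero p r j"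
  then show "padic_ball p n r \<subseteq> Zp p - even_digits p"
    using Zp_odd_digit_zero by (fastforce simp: padic_ball_def even_digits_def)
qed

lemma exists_larger_padic_ball_iff:
  assumes "p > 0" "(n, r) \<in> ball_codes p"
  shows "(\<exists>(n', r') \<in> ball_codes p. n' < n \<and> padic_ball p n r \<subseteq> padic_ball p n' r'
            \<and> padic_ball p n' r' \<subseteq> U)
    \<longleftrightarrow> (\<exists>n'. 1 \<le> n' \<and> n' < n \<and> padic_ball p n' (r mod int p ^ n') \<subseteq> U)"
proof
  assume "\<exists>(n', r') \<in> ball_codes p. n' < n \<and> padic_ball p n r \<subseteq> padic_ball p n' r'
    \<and> padic_ball p n' r' \<subseteq> U"
  then obtain n' r' where "(n', r') \<in> ball_codes p" "n' < n"
    "padic_ball p n r \<subseteq> padic_ball p n' r'" "padic_ball p n' r' \<subseteq> U" by blast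
  then show "\<exists>n'. 1 \<le> n' \<and> n' < n \<and> padic_ball p n' (r mod int p ^ n') \<subseteq> U"
    using padic_ball_subset_iff[OF assms, of n' r'] by (auto simp: ball_codes_def)
next
  assume "\<exists>n'. 1 \<le> n' \<and> n' < n \<and> padic_ball p n' (r mod int p ^ n') \<subseteq> U"
  then obtain n' where "1 \<le> n'" "n' < n" "padic_ball p n' (r mod int p ^ n') \<subseteq> U" by blast
  moreover have "(n', r mod int p ^ n') \<in> ball_codes p"
    using \<open>1 \<le> n'\<close> assms(1) by (simp add: ball_codes_def)
  ultimately show "\<exists>(n', r') \<in> ball_codes p. n' < n \<and> padic_ball p n r \<subseteq> padic_ball p n' r'
    \<and> padic_ball p n' r' \<subseteq> U"
    using padic_ball_subset_iff[OF assms, of n'] by fastforce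
qed

lemma maximal_balls_complement_iff:
  assumes "p > 0"
  shows "(n, r) \<in> maximal_balls p (Zp p - even_digits p) \<longleftrightarrow>
    (n, r) \<in> ball_codes p \<and> (\<exists>j. 2*j+2 \<le> n \<and> \<not> odd_digit_zero p r j)
      \<and> (\<forall>j. 2*j+2 < n \<longrightarrow> odd_digit_zero p r j)"
proof (cases "(n, r) \<in> ball_codes p")
  case True
  let ?U = "Zp p - even_digits p"
  have "padic_ball p n' (r mod int p ^ n') \<subseteq> ?U \<longleftrightarrow> (\<exists>j. 2*j+2 \<le> n' \<and> \<not> odd_digit_zero p r j)"
    if "1 \<le> n'" for n'
    using padic_ball_subset_complement_iff[OF assms, of n' "r mod int p ^ n'"] that assms
      odd_digit_zero_mod_power[of _ n' p r]
    by (auto simp: ball_codes_def)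
  then have "(\<exists>(n', r') \<in> ball_codes p. n' < n \<and> padic_ball p n r \<subseteq> padic_ball p n' r'
          \<and> padic_ball p n' r' \<subseteq> ?U)
      \<longleftrightarrow> (\<exists>n'. 1 \<le> n' \<and> n' < n \<and> (\<exists>j. 2*j+2 \<le> n' \<and> \<not> odd_digit_zero p r j))"
    unfolding exists_larger_padic_ball_iff[OF assms True] by blast
  also have "\<dots> \<longleftrightarrow> (\<exists>j. 2*j+2 < n \<and> \<not> odd_digit_zero p r j)"
    by (metis Suc_eq_plus1 le_add2 le_less_trans add_Suc_right order_refl one_add_one Suc_le_eq)
  finally show ?thesis
    using padic_ball_subset_complement_iff[OF assms True] True
    by (auto simp: maximal_balls_def)
qed (simp add: maximal_balls_def)

text \<open>The gaps of K at level j, i.e. the maximal balls of the complement of radius p^-(2j+2),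
  are the balls around the residues mod p^(2j+2) whose first nonzero odd digit is at p^(2j+1).\<close>

definition gap_residues :: "nat \<Rightarrow> nat \<Rightarrow> int set" where
  "gap_residues p j = {r. 0 \<le> r \<and> r < int p ^ (2*j+2) \<and> (\<forall>i<j. odd_digit_zero p r i)
     \<and> \<not> odd_digit_zero p r j}"

definition gap_code :: "nat \<times> int \<Rightarrow> nat \<times> int" where
  "gap_code = (\<lambda>(j, r). (2*j+2, r))"

lemma inj_gap_code: "inj gap_code"
  by (auto simp: inj_def gap_code_def)

lemma maximal_balls_complement_even_digits:
  assumes "p > 0"
  shows "maximal_balls p (Zp p - even_digits p) = gap_code ` (SIGMA j:UNIV. gap_residues p j)"
proof (intro set_eqI iffI)
  fix b assume "b \<in> maximal_balls p (Zp p - even_digits p)"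
  then obtain n r j where b: "b = (n, r)" and code: "(n, r) \<in> ball_codes p"
    and j: "2*j+2 \<le> n" "\<not> odd_digit_zero p r j"
    and below: "\<forall>i. 2*i+2 < n \<longrightarrow> odd_digit_zero p r i"
    using maximal_balls_complement_iff[OF assms] by (metis surj_pair)
  have "\<not> 2*j+2 < n" using j(2) below by blast
  then have "n = 2*j+2" using j(1) by linarith
  with code j below have "r \<in> gap_residues p j" by (auto simp: ball_codes_def gap_residues_def)
  then show "b \<in> gap_code ` (SIGMA j:UNIV. gap_residues p j)"
    using b \<open>n = 2*j+2\<close> by (auto simp: gap_code_def)
next
  fix b assume "b \<in> gap_code ` (SIGMA j:UNIV. gap_residues p j)"
  then obtain j r where "b = (2*j+2, r)" "r \<in> gap_residues p j" by (auto simp: gap_code_def)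
  then show "b \<in> maximal_balls p (Zp p - even_digits p)"
    using maximal_balls_complement_iff[OF assms] by (auto simp: ball_codes_def gap_residues_def)
qed

section \<open>Counting the gaps\<close>

lemma card_mod_div_split:
  fixes Q M :: int
  assumes "0 < Q"
  shows "card {r. 0 \<le> r \<and> r < Q * M \<and> P (r mod Q) \<and> R (r div Q)}
    = card {a. 0 \<le> a \<and> a < Q \<and> P a} * card {b. 0 \<le> b \<and> b < M \<and> R b}"
proof -
  let ?S = "{r. 0 \<le> r \<and> r < Q * M \<and> P (r mod Q) \<and> R (r div Q)}"
  let ?A = "{a. 0 \<le> a \<and> a < Q \<and> P a}" and ?B = "{b. 0 \<le> b \<and> b < M \<and> R b}"
  have "bij_betw (\<lambda>r. (r mod Q, r div Q)) ?S (?A \<times> ?B)"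
  proof (rule bij_betw_byWitness[where f' = "\<lambda>(a, b). a + Q * b"])
    show "\<forall>r\<in>?S. (\<lambda>(a, b). a + Q * b) (r mod Q, r div Q) = r" by simp
    show "\<forall>x\<in>?A \<times> ?B. (\<lambda>r. (r mod Q, r div Q)) ((\<lambda>(a, b). a + Q * b) x) = x"
      using assms by auto
    show "(\<lambda>r. (r mod Q, r div Q)) ` ?S \<subseteq> ?A \<times> ?B"
      using assms by (auto simp: pos_imp_zdiv_nonneg_iff zdiv_less_iff_less_mult)
    have "(a + Q * b) mod Q = a" "(a + Q * b) div Q = b" if "0 \<le> a" "a < Q" for a b
      using that assms by simp_all
    then show "(\<lambda>(a, b). a + Q * b) ` (?A \<times> ?B) \<subseteq> ?S"
      using assms by (force simp: zdiv_less_iff_less_mult[OF assms, symmetric])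
  qed
  then show ?thesis by (simp add: bij_betw_same_card card_cartesian_product)
qed

lemma odd_digit_zero_iff_div_less:
  assumes "p > 0" "0 \<le> r" "r < int p ^ (2*j+2)"
  shows "odd_digit_zero p r j \<longleftrightarrow> r div int p ^ (2*j) < int p"
proof -
  have "r mod int p ^ (2*j+2) = r" using assms by simp
  moreover have "r mod int p ^ (2*j+1) = r \<longleftrightarrow> r < int p ^ (2*j+1)"
    using assms(1,2) zmod_trivial_iff[of r "int p ^ (2*j+1)"] by auto
  moreover have "r < int p ^ (2*j+1) \<longleftrightarrow> r div int p ^ (2*j) < int p"
    using assms(1) zdiv_less_iff_less_mult[of "int p ^ (2*j)" r "int p"]
    by (simp add: mult.commute)
  ultimately show ?thesis unfolding odd_digit_zero_def by argo
qed

definition even_digit_residues :: "nat \<Rightarrow> nat \<Rightarrow> int set" where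
  "even_digit_residues p j = {a. 0 \<le> a \<and> a < int p ^ (2*j) \<and> (\<forall>i<j. odd_digit_zero p a i)}"

lemma card_odd_digit_level:
  assumes "p > 0"
  shows "card {r. 0 \<le> r \<and> r < int p ^ (2*j+2) \<and> (\<forall>i<j. odd_digit_zero p r i)
      \<and> R (odd_digit_zero p r j)}
    = card (even_digit_residues p j) * card {b. 0 \<le> b \<and> b < int p ^ 2 \<and> R (b < int p)}"
  (is "card ?S = _")
proof -
  let ?Q = "int p ^ (2*j)"
  have prefix: "(\<forall>i<j. odd_digit_zero p (r mod ?Q) i) \<longleftrightarrow> (\<forall>i<j. odd_digit_zero p r i)" for r
    using odd_digit_zero_mod_power[of _ "2*j" p r] by auto
  have "0 \<le> r \<and> r < int p ^ (2*j+2) \<and> (\<forall>i<j. odd_digit_zero p r i) \<and> R (odd_digit_zero p r j)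
      \<longleftrightarrow> 0 \<le> r \<and> r < int p ^ (2*j+2) \<and> (\<forall>i<j. odd_digit_zero p (r mod ?Q) i)
        \<and> R (r div ?Q < int p)"
    for r
  proof (cases "0 \<le> r \<and> r < int p ^ (2*j+2)")
    case True
    then show ?thesis using prefix[of r] odd_digit_zero_iff_div_less[OF assms, of r j] by simp
  next
    case False
    then show ?thesis by blast
  qed
  moreover have "?Q * int p ^ 2 = int p ^ (2*j+2)" by (rule power_add[symmetric])
  ultimately have set_eq: "?S = {r. 0 \<le> r \<and> r < ?Q * int p ^ 2
      \<and> (\<forall>i<j. odd_digit_zero p (r mod ?Q) i) \<and> R (r div ?Q < int p)}"
    by (simp only:)
  show ?thesis
    unfolding set_eq even_digit_residues_def using assms
    by (intro card_mod_div_split[where P = "\<lambda>a. \<forall>i<j. odd_digit_zero p a i"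
          and R = "\<lambda>b. R (b < int p)"])
      simp
qed

lemma card_even_digit_residues:
  assumes "p > 0"
  shows "card (even_digit_residues p j) = p ^ j"
proof (induction j)
  case 0
  have "even_digit_residues p 0 = {0}" by (auto simp: even_digit_residues_def)
  then show ?case by simp
next
  case (Suc j)
  have "(\<forall>i<Suc j. odd_digit_zero p r i)
      \<longleftrightarrow> (\<forall>i<j. odd_digit_zero p r i) \<and> id (odd_digit_zero p r j)" for r
    by (auto simp: less_Suc_eq)
  moreover have "2 * Suc j = 2*j+2" by simp
  ultimately have "even_digit_residues p (Suc j)
      = {r. 0 \<le> r \<and> r < int p ^ (2*j+2) \<and> (\<forall>i<j. odd_digit_zero p r i)
          \<and> id (odd_digit_zero p r j)}"
    unfolding even_digit_residues_def by (simp only: conj_assoc)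
  moreover have le: "int p \<le> int p * int p" using assms by simp
  have "{b. 0 \<le> b \<and> b < int p ^ 2 \<and> id (b < int p)} = {0..<int p}"
    unfolding power2_eq_square by (auto dest: less_le_trans[OF _ le])
  ultimately show ?case
    using card_odd_digit_level[OF assms, of j id] Suc.IH by simp
qed

lemma card_gap_residues:
  assumes "p > 0"
  shows "card (gap_residues p j) = (p - 1) * p ^ (j+1)"
proof -
  have "{b. 0 \<le> b \<and> b < int p ^ 2 \<and> \<not> b < int p} = {int p..<int p ^ 2}"
    by auto
  then have "card (gap_residues p j) = p ^ j * nat (int p ^ 2 - int p)"
    using card_odd_digit_level[OF assms, of j Not] card_even_digit_residues[OF assms]
    by (simp add: gap_residues_def)
  also have "\<dots> = (p - 1) * p ^ (j+1)"
    by (simp add: nat_diff_distrib' power2_eq_square algebra_simps flip: of_nat_mult of_nat_power)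
  finally show ?thesis .
qed

lemma finite_gap_residues: "finite (gap_residues p j)"
  by (rule finite_subset[of _ "{0..<int p ^ (2*j+2)}"]) (auto simp: gap_residues_def)

section \<open>The geometric zeta function\<close>

lemma has_sum_level_fibre:
  fixes c :: "'a::{topological_comm_monoid_add, semiring_1}"
  assumes "finite B" "\<And>r. r \<in> B \<Longrightarrow> f (j, r) = c"
  shows "((\<lambda>r. f (j, r)) has_sum of_nat (card B) * c) B"
proof -
  have "((\<lambda>r. f (j, r)) has_sum (\<Sum>r\<in>B. c)) B"
    using has_sum_finite[OF assms(1), of "\<lambda>r. f (j, r)"] assms(2) by (simp cong: sum.cong)
  then show ?thesis by simp
qed

lemma summable_on_Sigma_levels_iff:
  fixes f :: "nat \<times> 'b \<Rightarrow> real"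
  assumes "\<And>j. finite (B j)" "\<And>j. g j \<ge> 0" "\<And>j r. r \<in> B j \<Longrightarrow> f (j, r) = g j"
  shows "f summable_on (SIGMA j:UNIV. B j) \<longleftrightarrow> summable (\<lambda>j. real (card (B j)) * g j)"
proof -
  have fibre: "((\<lambda>r. f (j, r)) has_sum real (card (B j)) * g j) (B j)" for j
    using has_sum_level_fibre[where B = "B j" and f = f and j = j and c = "g j"] assms(1,3) by simp
  have "summable (\<lambda>j. real (card (B j)) * g j) \<longleftrightarrow> (\<lambda>j. real (card (B j)) * g j) summable_on UNIV"
    using assms(2) by (intro summable_on_UNIV_nonneg_real_iff[symmetric]) simp
  moreover have "(\<lambda>j. real (card (B j)) * g j) summable_on UNIV"
    if "f summable_on (SIGMA j:UNIV. B j)"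
  proof -
    have "(\<lambda>j. infsum (\<lambda>r. f (j, r)) (B j)) summable_on UNIV"
      by (rule summable_on_SigmaD[OF that]) (use fibre in \<open>auto simp: summable_on_def\<close>)
    then show ?thesis using infsumI[OF fibre] by simp
  qed
  moreover have "f summable_on (SIGMA j:UNIV. B j)"
    if "(\<lambda>j. real (card (B j)) * g j) summable_on UNIV"
    using summable_on_SigmaI[OF fibre that] assms(2,3) by simp
  ultimately show ?thesis by blast
qed

lemma has_sum_Sigma_levels:
  fixes f :: "nat \<times> 'b \<Rightarrow> 'a::{topological_comm_monoid_add, t3_space, semiring_1}"
  assumes "f summable_on (SIGMA j:UNIV. B j)" "\<And>j. finite (B j)"
    and "\<And>j r. r \<in> B j \<Longrightarrow> f (j, r) = g j"
    and "((\<lambda>j. of_nat (card (B j)) * g j) has_sum S) UNIV"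
  shows "(f has_sum S) (SIGMA j:UNIV. B j)"
proof (rule has_sum_SigmaI[OF _ assms(4,1)])
  show "((\<lambda>r. f (j, r)) has_sum of_nat (card (B j)) * g j) (B j)" for j
    using assms(2,3) by (intro has_sum_level_fibre)
qed

lemma ball_length_gap_code: "ball_length p (gap_code (j, r)) = real p powr - real (2*j+2)"
  by (simp add: ball_length_def gap_code_def)

lemma gap_level_real:
  assumes "p \<ge> 2"
  shows "real (card (gap_residues p j)) * (real p powr - real (2*j+2)) powr \<sigma>
    = (real p - 1) * (real p powr (1 - 2*\<sigma>)) ^ (j+1)"
proof -
  have p: "real p > 0" using assms by simp
  have "real p ^ (j+1) * (real p powr - real (2*j+2)) powr \<sigma>
      = real p powr (real (j+1)) * real p powr (- real (2*j+2) * \<sigma>)"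
    by (simp only: powr_realpow[symmetric, OF p] powr_powr)
  also have "\<dots> = real p powr ((1 - 2*\<sigma>) * real (j+1))"
    by (simp add: powr_add[symmetric] algebra_simps)
  also have "\<dots> = (real p powr (1 - 2*\<sigma>)) powr real (j+1)" by (rule powr_powr[symmetric])
  also have "\<dots> = (real p powr (1 - 2*\<sigma>)) ^ (j+1)" using p by (intro powr_realpow) simp
  finally show ?thesis
    using card_gap_residues[of p j] assms by (simp add: of_nat_diff mult.assoc)
qed

lemma gap_balls_summable_iff:
  assumes "p \<ge> 2"
  shows "(\<lambda>b. ball_length p b powr \<sigma>) summable_on gap_code ` (SIGMA j:UNIV. gap_residues p j)
    \<longleftrightarrow> \<sigma> > 1/2"
proof -
  let ?x = "real p powr (1 - 2*\<sigma>)"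
  have "(\<lambda>b. ball_length p b powr \<sigma>) summable_on gap_code ` (SIGMA j:UNIV. gap_residues p j)
      \<longleftrightarrow> ((\<lambda>b. ball_length p b powr \<sigma>) \<circ> gap_code)
            summable_on (SIGMA j:UNIV. gap_residues p j)"
    by (rule summable_on_reindex[OF inj_on_subset[OF inj_gap_code subset_UNIV]])
  also have "\<dots> \<longleftrightarrow>
      summable (\<lambda>j. real (card (gap_residues p j)) * (real p powr - real (2*j+2)) powr \<sigma>)"
    by (rule summable_on_Sigma_levels_iff[OF finite_gap_residues])
      (simp_all add: ball_length_gap_code)
  also have "(\<lambda>j. real (card (gap_residues p j)) * (real p powr - real (2*j+2)) powr \<sigma>)
      = (\<lambda>j. ((real p - 1) * ?x) * ?x ^ j)"
    using gap_level_real[OF assms] by (simp add: mult.assoc)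
  also have "summable \<dots> \<longleftrightarrow> ?x < 1"
    using assms by (simp add: summable_cmult_iff summable_geometric_iff)
  also have "\<dots> \<longleftrightarrow> \<sigma> > 1/2"
    using assms powr_less_cancel_iff[of "real p" "1 - 2*\<sigma>" 0] by auto
  finally show ?thesis .
qed

definition gap_ratio :: "nat \<Rightarrow> complex \<Rightarrow> complex" where
  "gap_ratio p s = exp ((1 - 2 * s) * of_real (ln (real p)))"

definition gap_zeta :: "nat \<Rightarrow> complex \<Rightarrow> complex" where
  "gap_zeta p s = (of_nat p - 1) * gap_ratio p s / (1 - gap_ratio p s)"

lemma zeta_term_eq_exp:
  assumes "p \<ge> 2"
  shows "zeta_term p s b = exp (- of_nat (fst b) * of_real (ln (real p)) * s)"
proof -
  have pos: "0 < real p powr - real (fst b)" using assms by simp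
  then have "zeta_term p s b = exp (s * of_real (ln (real p powr - real (fst b))))"
    by (simp add: zeta_term_def ball_length_def powr_def Ln_of_real)
  then show ?thesis using assms by (simp add: ln_powr algebra_simps)
qed

lemma norm_zeta_term: "norm (zeta_term p s b) = ball_length p b powr Re s"
  unfolding zeta_term_def by (subst norm_powr_real_powr) (auto simp: ball_length_def)

lemma gap_level_complex:
  assumes "p \<ge> 2"
  shows "of_nat (card (gap_residues p j)) * exp (- of_nat (2*j+2) * of_real (ln (real p)) * s)
    = (of_nat p - 1) * gap_ratio p s ^ (j+1)"
proof -
  let ?L = "complex_of_real (ln (real p))"
  have "exp ?L = of_nat p" by (subst exp_of_real) (use assms in simp)
  then have "(of_nat p :: complex) ^ (j+1) * exp (- of_nat (2*j+2) * ?L * s)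
      = exp (of_nat (j+1) * ?L) * exp (- of_nat (2*j+2) * ?L * s)"
    by (simp only: exp_of_nat_mult)
  also have "\<dots> = gap_ratio p s ^ (j+1)"
    unfolding gap_ratio_def
    by (simp add: exp_add[symmetric] exp_of_nat_mult[symmetric] algebra_simps)
  finally show ?thesis
    using card_gap_residues[of p j] assms by (simp add: of_nat_diff mult.assoc)
qed

lemma has_sum_zeta_gap_balls:
  assumes "p \<ge> 2" "Re s > 1/2"
  shows "(zeta_term p s has_sum gap_zeta p s) (gap_code ` (SIGMA j:UNIV. gap_residues p j))"
proof -
  let ?w = "gap_ratio p s"
  have w: "norm ?w < 1"
    using assms by (simp add: gap_ratio_def mult_neg_pos)
  have "(\<lambda>j. ((of_nat p - 1) * ?w) * ?w ^ j) sums (((of_nat p - 1) * ?w) * (1 / (1 - ?w)))"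
    by (intro sums_mult geometric_sums w)
  then have "((\<lambda>j. ((of_nat p - 1) * ?w) * ?w ^ j) has_sum gap_zeta p s) UNIV"
    using w by (intro norm_summable_imp_has_sum)
      (simp_all add: gap_zeta_def norm_mult norm_power summable_geometric)
  moreover have "(\<lambda>j. of_nat (card (gap_residues p j)) * exp (- of_nat (2*j+2) * of_real (ln (real p)) * s))
      = (\<lambda>j. ((of_nat p - 1) * ?w) * ?w ^ j)"
  proof
    fix j
    show "of_nat (card (gap_residues p j)) * exp (- of_nat (2*j+2) * of_real (ln (real p)) * s)
        = ((of_nat p - 1) * ?w) * ?w ^ j"
      using gap_level_complex[OF assms(1), of j s] by (simp add: mult.assoc)
  qed
  ultimately have levels: "((\<lambda>j. of_nat (card (gap_residues p j)) * exp (- of_nat (2*j+2) * of_real (ln (real p)) * s))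
      has_sum gap_zeta p s) UNIV"
    by simp
  have "(\<lambda>b. norm (zeta_term p s b)) summable_on gap_code ` (SIGMA j:UNIV. gap_residues p j)"
    unfolding norm_zeta_term using gap_balls_summable_iff[OF assms(1)] assms(2) by simp
  then have "(zeta_term p s \<circ> gap_code) summable_on (SIGMA j:UNIV. gap_residues p j)"
    using abs_summable_summable summable_on_reindex[OF inj_on_subset[OF inj_gap_code subset_UNIV]]
    by blast
  then have "((zeta_term p s \<circ> gap_code) has_sum gap_zeta p s) (SIGMA j:UNIV. gap_residues p j)"
    by (rule has_sum_Sigma_levels[OF _ finite_gap_residues _ levels])
      (simp add: zeta_term_eq_exp[OF assms(1)] gap_code_def)
  then show ?thesis
    using has_sum_reindex[OF inj_on_subset[OF inj_gap_code subset_UNIV]] by blast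
qed

lemma gap_ratio_eq_1_iff:
  assumes "p \<ge> 2"
  shows "gap_ratio p z = 1 \<longleftrightarrow> (\<exists>n::int. z = Complex (1/2) (of_int n * pi / ln (real p)))"
proof -
  define L where "L = ln (real p)"
  have L: "L > 0" unfolding L_def using assms by simp
  have "gap_ratio p z = 1
      \<longleftrightarrow> (1 - 2 * Re z) * L = 0 \<and> (\<exists>n::int. - 2 * Im z * L = of_int (2 * n) * pi)"
    unfolding gap_ratio_def L_def[symmetric] exp_eq_1 by simp
  also have "\<dots> \<longleftrightarrow> (\<exists>n::int. z = Complex (1/2) (of_int n * pi / L))"
  proof
    assume "(1 - 2 * Re z) * L = 0 \<and> (\<exists>n::int. - 2 * Im z * L = of_int (2 * n) * pi)"
    then obtain n :: int where "Re z = 1/2" "- 2 * Im z * L = of_int (2 * n) * pi" using L by auto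
    then have "z = Complex (1/2) (of_int (- n) * pi / L)"
      using L by (simp add: complex_eq_iff field_simps)
    then show "\<exists>n::int. z = Complex (1/2) (of_int n * pi / L)" by blast
  next
    assume "\<exists>n::int. z = Complex (1/2) (of_int n * pi / L)"
    then obtain n :: int where "z = Complex (1/2) (of_int n * pi / L)" by blast
    then have "- 2 * Im z * L = of_int (2 * (- n)) * pi" "(1 - 2 * Re z) * L = 0"
      using L by simp_all
    then show "(1 - 2 * Re z) * L = 0 \<and> (\<exists>n::int. - 2 * Im z * L = of_int (2 * n) * pi)" by blast
  qed
  finally show ?thesis by (simp only: L_def)
qed

text \<open>The solutions of gap_ratio p s = 1 lie on a vertical line with spacing pi / ln p.\<close>

lemma eventually_gap_ratio_neq_1:
  assumes "p \<ge> 2" "gap_ratio p z = 1"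
  shows "eventually (\<lambda>s. gap_ratio p s \<noteq> 1) (at z)"
proof -
  define L where "L = ln (real p)"
  have L: "L > 0" unfolding L_def using assms by simp
  obtain n :: int where n: "z = Complex (1/2) (of_int n * pi / L)"
    using gap_ratio_eq_1_iff[OF assms(1)] assms(2) L_def by blast
  have "gap_ratio p s \<noteq> 1" if "s \<noteq> z" "dist s z < pi / L" for s
  proof
    assume "gap_ratio p s = 1"
    then obtain m :: int where m: "s = Complex (1/2) (of_int m * pi / L)"
      using gap_ratio_eq_1_iff[OF assms(1)] L_def by blast
    then have "m \<noteq> n" using n that(1) by auto
    then have "pi / L \<le> \<bar>of_int m - of_int n\<bar> * pi / L"
      using L by (simp add: divide_right_mono)
    also have "\<dots> = dist s z"
    proof -
      have "s - z = Complex 0 ((of_int m - of_int n) * pi / L)"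
        using m n by (simp add: complex_eq_iff diff_divide_distrib left_diff_distrib)
      then show ?thesis using L by (simp add: dist_norm cmod_def abs_mult)
    qed
    finally show False using that(2) by simp
  qed
  then show ?thesis
    unfolding eventually_at using L by (intro exI[of _ "pi / L"]) auto
qed

lemma gap_zeta_meromorphic: "gap_zeta p meromorphic_on UNIV"
  unfolding gap_zeta_def[abs_def] gap_ratio_def
  by (intro meromorphic_on_divide analytic_on_imp_meromorphic_on analytic_intros)

lemma is_pole_gap_zeta_iff:
  assumes "p \<ge> 2"
  shows "is_pole (gap_zeta p) z \<longleftrightarrow> gap_ratio p z = 1"
proof
  assume "gap_ratio p z = 1"
  have "isCont (\<lambda>s. 1 - gap_ratio p s) z"
    unfolding gap_ratio_def by (intro continuous_intros)
  then have "((\<lambda>s. 1 - gap_ratio p s) \<longlongrightarrow> 0) (at z)"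
    using \<open>gap_ratio p z = 1\<close> by (simp add: isCont_def)
  then have "filterlim (\<lambda>s. 1 - gap_ratio p s) (at 0) (at z)"
    using eventually_gap_ratio_neq_1[OF assms \<open>gap_ratio p z = 1\<close>] by (simp add: filterlim_atI)
  moreover have "isCont (\<lambda>s. (of_nat p - 1) * gap_ratio p s) z"
    unfolding gap_ratio_def by (intro continuous_intros)
  ultimately show "is_pole (gap_zeta p) z"
    using assms \<open>gap_ratio p z = 1\<close> unfolding gap_zeta_def[abs_def] by (intro is_pole_divide) auto
next
  assume pole: "is_pole (gap_zeta p) z"
  show "gap_ratio p z = 1"
  proof (rule ccontr)
    assume "gap_ratio p z \<noteq> 1"
    then have "gap_zeta p analytic_on {z}"
      unfolding gap_zeta_def[abs_def] gap_ratio_def by (intro analytic_intros) auto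
    then show False using pole analytic_at_imp_no_pole by blast
  qed
qed

lemma poles_gap_zeta:
  assumes "p \<ge> 2"
  shows "{z. is_pole (gap_zeta p) z} = {Complex (1/2) (of_int n * pi / ln (real p)) | n::int. True}"
  using is_pole_gap_zeta_iff[OF assms] gap_ratio_eq_1_iff[OF assms] by auto

theorem theorem3p1:
  fixes p :: nat
  assumes "prime p"
  shows "\<exists>(N::nat) (m::nat) (c::nat \<Rightarrow> int) K.
    N \<ge> 2 \<and> m \<ge> 1 \<and>
    K \<subseteq> Zp p \<and> K \<noteq> {} \<and> compact K \<and>
    K = (\<Union>i<N. padic_sim p (c i) m ` K) \<and>
    (\<forall>K'. K' \<subseteq> Zp p \<and> K' \<noteq> {} \<and> compact K' \<and>
          K' = (\<Union>i<N. padic_sim p (c i) m ` K') \<longrightarrow> K' = K) \<and>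
    (let L = maximal_balls p (Zp p - K) in
      (\<forall>\<sigma>::real. \<sigma> > 1/2 \<longrightarrow> (\<lambda>b. ball_length p b powr \<sigma>) summable_on L) \<and>
      (\<forall>\<sigma>::real. \<sigma> < 1/2 \<longrightarrow> \<not> ((\<lambda>b. ball_length p b powr \<sigma>) summable_on L)) \<and>
      (\<exists>f. f meromorphic_on UNIV \<and>
           (\<forall>s. Re s > 1/2 \<longrightarrow> (zeta_term p s has_sum f s) L) \<and>
           {z. is_pole f z} =
             {Complex (1/2) (real_of_int n * pi / ln (real p)) | n::int. True}))"
proof -
  have p: "p \<ge> 2" using assms by (rule prime_ge_2_nat)
  let ?K = "even_digits p" and ?L = "gap_code ` (SIGMA j:UNIV. gap_residues p j)"
  have subset: "?K \<subseteq> Zp p" by (auto simp: even_digits_def)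
  then have compact: "compact ?K" by (rule compact_subset_Zp[OF closed_even_digits])
  have "(\<lambda>_. 0) \<in> ?K" using p by (simp add: even_digits_def Zp_def)
  then have nonempty: "?K \<noteq> {}" by blast
  have self_similar: "?K = (\<Union>i<p. padic_sim p (int i) 2 ` ?K)"
    using p by (intro even_digits_eq_Union) simp
  have unique: "\<forall>K'. K' \<subseteq> Zp p \<and> K' \<noteq> {} \<and> compact K'
      \<and> K' = (\<Union>i<p. padic_sim p (int i) 2 ` K') \<longrightarrow> K' = ?K"
    using p even_digits_unique[of p] by auto
  have L: "maximal_balls p (Zp p - ?K) = ?L"
    using p by (intro maximal_balls_complement_even_digits) simp
  have summable: "\<forall>\<sigma>::real. \<sigma> > 1/2 \<longrightarrow> (\<lambda>b. ball_length p b powr \<sigma>) summable_on ?L"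
    and not_summable: "\<forall>\<sigma>::real. \<sigma> < 1/2 \<longrightarrow> \<not> (\<lambda>b. ball_length p b powr \<sigma>) summable_on ?L"
    using gap_balls_summable_iff[OF p] by auto
  have zeta: "\<exists>f. f meromorphic_on UNIV \<and> (\<forall>s. Re s > 1/2 \<longrightarrow> (zeta_term p s has_sum f s) ?L) \<and>
      {z. is_pole f z} = {Complex (1/2) (real_of_int n * pi / ln (real p)) | n::int. True}"
    using gap_zeta_meromorphic has_sum_zeta_gap_balls[OF p] poles_gap_zeta[OF p] by blast
  show ?thesis
    by (intro exI[of _ p] exI[of _ 2] exI[of _ "\<lambda>i. int i"] exI[of _ ?K])
      (unfold Let_def L, intro conjI; (fact | simp))
qed

end
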